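(* Let $G$ be an undirected unweighted graph on $n$ vertices with minimum cut value $c\geq 1$, and fix a minimum cut $C$ of $G$. If Karger's contraction process is run on $G$ until there are at most $cn$ edges remaining in the (contracted) graph, then $C$ survives with at least a constant probability (bounded below by an absolute constant independent of $G$).
   Context: Karger's contraction process: repeatedly choose a uniformly random edge of the current multigraph and contract its two endpoints into a single super-vertex, keeping parallel edges and removing self-loops. Each super-vertex corresponds to a set of original vertices. A cut $C$ of $G$ (the set of edges between $S$ and $V\setminus S$) survives if none of its edges has been contracted, i.e. every super-vertex is contained in $S$ or in $V\setminus S$. The minimum cut value is $\min_{\emptyset\ne S\subsetneq V}$ of the number of edges between $S$ and $V\setminus S$. *)

theory Defs
  imports "HOL-Probability.Probability"
begin

definition simple_graph :: "'a set \<Rightarrow> 'a set set \<Rightarrow> bool" where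
  "simple_graph V E \<longleftrightarrow> finite V \<and> (\<forall>e\<in>E. \<exists>u v. u \<in> V \<and> v \<in> V \<and> u \<noteq> v \<and> e = {u, v})"

definition cut_edges :: "'a set set \<Rightarrow> 'a set \<Rightarrow> 'a set set" where
  "cut_edges E S = {e \<in> E. \<exists>u v. e = {u, v} \<and> u \<in> S \<and> v \<notin> S}"

definition min_cut_value :: "'a set \<Rightarrow> 'a set set \<Rightarrow> nat" where
  "min_cut_value V E = Min {card (cut_edges E S) | S. S \<noteq> {} \<and> S \<subset> V}"

text \<open>State of the contraction process: the partition of V into super-vertices.
  The edges of the current multigraph are exactly the original edges whose endpoints
  lie in different super-vertices (parallel edges kept, self-loops removed).\<close>
definition remaining_edges :: "'a set set \<Rightarrow> 'a set set \<Rightarrow> 'a set set" where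
  "remaining_edges E P = {e \<in> E. \<not> (\<exists>B\<in>P. e \<subseteq> B)}"

definition contract :: "'a set set \<Rightarrow> 'a set \<Rightarrow> 'a set set" where
  "contract P e = (P - {B \<in> P. B \<inter> e \<noteq> {}}) \<union> {\<Union> {B \<in> P. B \<inter> e \<noteq> {}}}"

definition karger_step :: "'a set set \<Rightarrow> nat \<Rightarrow> 'a set set \<Rightarrow> 'a set set pmf" where
  "karger_step E k P =
     (if card (remaining_edges E P) \<le> k then return_pmf P
      else map_pmf (contract P) (pmf_of_set (remaining_edges E P)))"

text \<open>Run the process until at most k edges remain. At most card V - 1 contractions can
  happen, so card V iterations of the (stopping) step reach the final state.\<close>
definition karger_run :: "'a set \<Rightarrow> 'a set set \<Rightarrow> nat \<Rightarrow> 'a set set pmf" where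
  "karger_run V E k =
     ((\<lambda>p. bind_pmf p (karger_step E k)) ^^ card V) (return_pmf ((\<lambda>v. {v}) ` V))"

definition cut_survives :: "'a set \<Rightarrow> 'a set set \<Rightarrow> bool" where
  "cut_survives S P \<longleftrightarrow> (\<forall>B\<in>P. B \<subseteq> S \<or> B \<inter> S = {})"

end

theory Submission
  imports Defs
begin

text \<open>While more than \<open>k \<ge> c\<close> edges remain, a uniformly random remaining edge lies in the
  fixed cut of size \<open>c\<close> with probability less than \<open>c / k\<close>. Each contraction merges two blocks
  of the partition, so at most \<open>n - 1\<close> contractions happen and the cut survives with probability
  at least \<open>(1 - c / k) ^ (n - 1)\<close>. For \<open>k = c n\<close> this is \<open>(1 - 1/n) ^ (n - 1) \<ge> 1/e\<close>.\<close>

lemma measure_bind_pmf_of_set: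
  assumes "finite R" "R \<noteq> {}"
  shows "measure_pmf.prob (bind_pmf (pmf_of_set R) f) A
       = (\<Sum>e\<in>R. measure_pmf.prob (f e) A) / card R"
proof -
  have "ennreal (measure_pmf.prob (bind_pmf (pmf_of_set R) f) A)
      = emeasure (bind_pmf (pmf_of_set R) f) A"
    by (simp add: measure_pmf.emeasure_eq_measure)
  also have "\<dots> = (\<integral>\<^sup>+x. emeasure (f x) A \<partial>measure_pmf (pmf_of_set R))"
    by simp
  also have "\<dots> = (\<Sum>e\<in>R. emeasure (f e) A) / card R"
    using assms by (simp add: nn_integral_pmf_of_set)
  also have "\<dots> = ennreal ((\<Sum>e\<in>R. measure_pmf.prob (f e) A) / card R)"
    using assms
    by (simp add: measure_pmf.emeasure_eq_measure ennreal_of_nat_eq_real_of_nat divide_ennreal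
        sum_nonneg card_gt_0_iff)
  finally show ?thesis
    by (subst (asm) ennreal_inj) (auto intro!: sum_nonneg divide_nonneg_nonneg)
qed

lemma exp_minus_one_le_power:
  assumes "0 < n"
  shows "exp (-1) \<le> (1 - 1 / real n) ^ (n - 1)"
proof (cases "n = 1")
  case False
  define m where "m = n - 1"
  have m: "n = Suc m" "0 < m" using assms False by (auto simp: m_def)
  have "(1 + 1 / real m) ^ m \<le> exp (1 / real m) ^ m"
    using exp_ge_add_one_self[of "1 / real m"] by (intro power_mono) (auto simp: add.commute)
  also have "\<dots> = exp 1"
    using m by (simp flip: exp_of_nat_mult)
  finally have "inverse (exp 1) \<le> inverse ((1 + 1 / real m) ^ m)"
    by (intro le_imp_inverse_le) (auto intro!: zero_less_power add_pos_nonneg)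
  moreover have "1 - 1 / real n = inverse (1 + 1 / real m)"
    using m by (simp add: field_simps)
  ultimately show ?thesis
    by (simp add: exp_minus m_def power_inverse)
qed simp

lemma finite_edges: "simple_graph V E \<Longrightarrow> finite E"
  unfolding simple_graph_def by (rule finite_subset[of E "Pow V"]) auto

lemma cut_edges_subset_remaining_edges:
  "cut_survives S P \<Longrightarrow> cut_edges E S \<subseteq> remaining_edges E P"
  unfolding cut_survives_def cut_edges_def remaining_edges_def by blast

lemma contract_remaining_edge:
  assumes "simple_graph V E" "partition_on V P" "e \<in> remaining_edges E P"
  obtains u v B1 B2 where "e = {u, v}" "u \<in> B1" "v \<in> B2" "B1 \<in> P" "B2 \<in> P" "B1 \<noteq> B2"
    and "contract P e = insert (B1 \<union> B2) (P - {B1, B2})"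
proof -
  obtain u v where uv: "u \<in> V" "v \<in> V" "e = {u, v}" "\<not> (\<exists>B\<in>P. e \<subseteq> B)"
    using assms unfolding simple_graph_def remaining_edges_def by blast
  obtain B1 B2 where B: "B1 \<in> P" "B2 \<in> P" "u \<in> B1" "v \<in> B2"
    using uv partition_onD1[OF assms(2)] by blast
  have "{B \<in> P. B \<inter> e \<noteq> {}} = {B1, B2}"
    using B uv partition_onD2[OF assms(2)] by (auto simp: disjoint_def)
  with B uv show thesis
    by (intro that[of u v B1 B2]) (auto simp: contract_def)
qed

lemma partition_on_merge:
  assumes "partition_on V P" "B1 \<in> P" "B2 \<in> P"
  shows "partition_on V (insert (B1 \<union> B2) (P - {B1, B2}))"
  using assms unfolding partition_on_def disjoint_def by auto

lemma partition_on_contract: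
  "simple_graph V E \<Longrightarrow> partition_on V P \<Longrightarrow> e \<in> remaining_edges E P \<Longrightarrow>
    partition_on V (contract P e)"
  by (metis contract_remaining_edge partition_on_merge)

lemma card_contract:
  assumes "simple_graph V E" "partition_on V P" "e \<in> remaining_edges E P"
  shows "card (contract P e) = card P - 1" and "2 \<le> card P"
proof -
  obtain u v B1 B2 where B: "u \<in> B1" "B1 \<in> P" "B2 \<in> P" "B1 \<noteq> B2"
    and ctr: "contract P e = insert (B1 \<union> B2) (P - {B1, B2})"
    using contract_remaining_edge[OF assms] by metis
  have fin: "finite P"
    using assms(1,2) finite_elements unfolding simple_graph_def by blast
  show two: "2 \<le> card P"
    using B fin card_mono[of P "{B1, B2}"] by simp
  have "B1 \<union> B2 \<notin> P"
  proof
    assume "B1 \<union> B2 \<in> P"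
    have "B1 \<inter> B2 = {}" "B2 \<noteq> {}"
      using B assms(2) unfolding partition_on_def disjoint_def by auto
    then have "B1 \<union> B2 \<noteq> B1"
      by blast
    then have "(B1 \<union> B2) \<inter> B1 = {}"
      by (rule disjointD[OF partition_onD2[OF assms(2)] \<open>B1 \<union> B2 \<in> P\<close> B(2)])
    then show False
      using B by blast
  qed
  then show "card (contract P e) = card P - 1"
    using B fin two by (simp add: ctr card_Diff_subset)
qed

lemma cut_survives_contract:
  assumes "simple_graph V E" "partition_on V P" "e \<in> remaining_edges E P"
    and "cut_survives S P" "e \<notin> cut_edges E S"
  shows "cut_survives S (contract P e)"
proof -
  obtain u v B1 B2 where B: "e = {u, v}" "u \<in> B1" "v \<in> B2" "B1 \<in> P" "B2 \<in> P"
    and ctr: "contract P e = insert (B1 \<union> B2) (P - {B1, B2})"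
    using contract_remaining_edge[OF assms(1-3)] by metis
  have "u \<in> S \<longleftrightarrow> v \<in> S"
    using assms(3,5) B(1) unfolding cut_edges_def remaining_edges_def by blast
  then show ?thesis
    using assms(4) B unfolding cut_survives_def ctr by blast
qed

fun karger_steps :: "'a set set \<Rightarrow> nat \<Rightarrow> nat \<Rightarrow> 'a set set \<Rightarrow> 'a set set pmf" where
  "karger_steps E k 0 P = return_pmf P"
| "karger_steps E k (Suc t) P = bind_pmf (karger_step E k P) (karger_steps E k t)"

lemma funpow_bind_karger_step:
  "((\<lambda>p. bind_pmf p (karger_step E k)) ^^ t) p = bind_pmf p (karger_steps E k t)"
proof (induction t arbitrary: p)
  case 0
  show ?case
    by (simp add: bind_return_pmf')
next
  case (Suc t)
  show ?case
    by (simp only: funpow_Suc_right o_apply Suc bind_assoc_pmf karger_steps.simps)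
qed

lemma karger_run_eq_karger_steps:
  "karger_run V E k = karger_steps E k (card V) ((\<lambda>v. {v}) ` V)"
  unfolding karger_run_def funpow_bind_karger_step by (simp add: bind_return_pmf)

lemma prob_cut_survives_karger_steps:
  assumes g: "simple_graph V E" and ck: "card (cut_edges E S) \<le> k"
  shows "partition_on V P \<Longrightarrow> cut_survives S P \<Longrightarrow>
    (1 - card (cut_edges E S) / k) ^ (card P - 1)
      \<le> measure_pmf.prob (karger_steps E k t P) {P. cut_survives S P}"
proof (induction t arbitrary: P)
  case 0
  have "(1 - card (cut_edges E S) / k) ^ (card P - 1) \<le> 1"
    using ck by (intro power_le_one) (auto simp: divide_le_eq_1)
  then show ?case
    using 0 by simp
next
  case (Suc t)
  define C where "C = cut_edges E S"
  define q where "q = 1 - card C / k"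
  define R where "R = remaining_edges E P"
  define A where "A = {P. cut_survives S P}"
  define p where "p e = measure_pmf.prob (karger_steps E k t (contract P e)) A" for e
  show ?case
  proof (cases "card R \<le> k")
    case True
    then show ?thesis
      using Suc by (simp add: R_def karger_step_def bind_return_pmf)
  next
    case False
    have finR: "finite R"
      unfolding R_def remaining_edges_def using finite_edges[OF g] by simp
    have CR: "C \<subseteq> R"
      unfolding C_def R_def using Suc.prems(2) by (rule cut_edges_subset_remaining_edges)
    have R0: "0 < card R"
      using False by linarith
    have step: "karger_steps E k (Suc t) P
        = bind_pmf (pmf_of_set R) (\<lambda>e. karger_steps E k t (contract P e))"
      using False by (simp add: R_def karger_step_def bind_map_pmf)
    obtain e0 where "e0 \<in> R"
      using R0 by fastforce
    then have two: "2 \<le> card P"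
      using card_contract(2)[OF g Suc.prems(1)] by (simp add: R_def)
    have q0: "0 \<le> q"
      using ck by (auto simp: q_def C_def divide_le_eq_1)
    have q_le: "q \<le> real (card R - card C) / card R"
    proof -
      have "card C / card R \<le> card C / k"
        using False ck by (cases "k = 0") (auto simp: C_def intro!: divide_left_mono)
      then show ?thesis
        using R0 card_mono[OF finR CR] by (simp add: q_def of_nat_diff diff_divide_distrib)
    qed
    have p_ge: "q ^ (card P - 2) \<le> p e" if "e \<in> R - C" for e
    proof -
      have eR: "e \<in> remaining_edges E P"
        using that by (simp add: R_def)
      have "card (contract P e) - 1 = card P - 2"
        using card_contract(1)[OF g Suc.prems(1) eR] by simp
      then show ?thesis
        using Suc.IH[OF partition_on_contract[OF g Suc.prems(1) eR]
            cut_survives_contract[OF g Suc.prems(1) eR Suc.prems(2)]] that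
        by (simp add: p_def A_def q_def C_def)
    qed
    have "real (card R - card C) * q ^ (card P - 2) = (\<Sum>e\<in>R - C. q ^ (card P - 2))"
      using CR finR by (simp add: card_Diff_subset finite_subset)
    also have "\<dots> \<le> (\<Sum>e\<in>R - C. p e)"
      using p_ge by (rule sum_mono)
    also have "\<dots> \<le> (\<Sum>e\<in>R. p e)"
      using finR by (intro sum_mono2) (auto simp: p_def)
    finally have sum_ge: "real (card R - card C) * q ^ (card P - 2) \<le> (\<Sum>e\<in>R. p e)" .
    have "card P - 1 = Suc (card P - 2)"
      using two by arith
    then have "q ^ (card P - 1) = q * q ^ (card P - 2)"
      by (simp only: power_Suc)
    also have "\<dots> \<le> real (card R - card C) / card R * q ^ (card P - 2)"
      using q_le q0 by (intro mult_right_mono) auto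
    also have "\<dots> \<le> (\<Sum>e\<in>R. p e) / card R"
      using sum_ge R0 by (simp add: divide_right_mono)
    also have "\<dots> = measure_pmf.prob (karger_steps E k (Suc t) P) A"
      unfolding step p_def using R0 by (simp add: measure_bind_pmf_of_set card_gt_0_iff)
    finally show ?thesis
      by (simp add: q_def C_def A_def)
  qed
qed

theorem mainTheorem5:
  shows "\<exists>\<delta>::real. \<delta> > 0 \<and>
    (\<forall>(V::nat set) (E::nat set set) (S::nat set).
       simple_graph V E \<and> min_cut_value V E \<ge> 1 \<and>
       S \<noteq> {} \<and> S \<subset> V \<and> card (cut_edges E S) = min_cut_value V E \<longrightarrow>
       measure_pmf.prob (karger_run V E (min_cut_value V E * card V)) {P. cut_survives S P} \<ge> \<delta>)"
proof (intro exI[of _ "exp (-1)"] conjI allI impI)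
  fix V :: "nat set" and E :: "nat set set" and S :: "nat set"
  assume "simple_graph V E \<and> min_cut_value V E \<ge> 1 \<and>
       S \<noteq> {} \<and> S \<subset> V \<and> card (cut_edges E S) = min_cut_value V E"
  then have g: "simple_graph V E" and c: "card (cut_edges E S) = min_cut_value V E"
    and c1: "1 \<le> min_cut_value V E" and "S \<noteq> {}" "S \<subset> V"
    by auto
  then have n: "0 < card V"
    using card_gt_0_iff g unfolding simple_graph_def by blast
  let ?k = "min_cut_value V E * card V" and ?I = "(\<lambda>v. {v}) ` V"
  have "(1 - card (cut_edges E S) / ?k) ^ (card ?I - 1)
      \<le> measure_pmf.prob (karger_steps E ?k (card V) ?I) {P. cut_survives S P}"
    using c n by (intro prob_cut_survives_karger_steps[OF g])
      (auto simp: partition_on_singletons cut_survives_def)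
  moreover have "card (cut_edges E S) / ?k = 1 / card V" and "card ?I = card V"
    using c c1 by (simp_all add: card_image)
  ultimately have "(1 - 1 / card V) ^ (card V - 1)
      \<le> measure_pmf.prob (karger_run V E ?k) {P. cut_survives S P}"
    by (simp add: karger_run_eq_karger_steps)
  then show "exp (-1) \<le> measure_pmf.prob (karger_run V E (min_cut_value V E * card V)) {P. cut_survives S P}"
    using exp_minus_one_le_power[OF n] by linarith
qed simp

end
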